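(* Let $H$ be a complex Hilbert space, let $P \in \mathcal{L}(H)$ be an orthogonal projection satisfying the property $\mathcal{AN}$, and let $\eta > 1/2$ be a real number. Then the operator $T := \eta I - P$ satisfies the property $\mathcal{AN}^*$.
   Context: $\mathcal{L}(H)$ is the space of bounded linear operators on $H$. For a closed subspace $M \neq \{0\}$ of $H$ and $A \in \mathcal{L}(H)$: $A|_M$ satisfies $\mathcal{N}$ if there is $x_0 \in M$ with $\|x_0\|=1$ and $\|Ax_0\| = \sup\{\|Ax\| : x\in M, \|x\|=1\}$; $A|_M$ satisfies $\mathcal{N}^*$ if there is $x_0 \in M$ with $\|x_0\|=1$ and $\|Ax_0\| = \inf\{\|Ax\| : x\in M, \|x\|=1\}$. $A$ satisfies the property $\mathcal{AN}$ (resp. $\mathcal{AN}^*$) if $A|_M$ satisfies $\mathcal{N}$ (resp. $\mathcal{N}^*$) for every closed subspace $M \neq \{0\}$ of $H$. *)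

theory Defs
  imports "HOL-Analysis.Analysis"
begin

text \<open>The underlying real normed vector space structure is
the restriction of scalars to the reals.\<close>

class complex_inner = real_normed_vector +
  fixes scaleC :: "complex \<Rightarrow> 'a \<Rightarrow> 'a"
    and cinner :: "'a \<Rightarrow> 'a \<Rightarrow> complex"
  assumes scaleR_scaleC: "scaleR r x = scaleC (complex_of_real r) x"
    and scaleC_add_right: "scaleC a (x + y) = scaleC a x + scaleC a y"
    and scaleC_add_left: "scaleC (a + b) x = scaleC a x + scaleC b x"
    and scaleC_scaleC: "scaleC a (scaleC b x) = scaleC (a * b) x"
    and scaleC_one: "scaleC 1 x = x"
    and cinner_commute: "cinner x y = cnj (cinner y x)"
    and cinner_add_left: "cinner (x + y) z = cinner x z + cinner y z"
    and cinner_scaleC_left: "cinner (scaleC a x) y = cnj a * cinner x y"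
    and cinner_self_real: "Im (cinner x x) = 0"
    and cinner_self_nonneg: "0 \<le> Re (cinner x x)"
    and cinner_self_eq_zero: "cinner x x = 0 \<longleftrightarrow> x = 0"
    and norm_eq_sqrt_cinner: "norm x = sqrt (Re (cinner x x))"

class chilbert_space = complex_inner + complete_space

definition bounded_clinear :: "('a::complex_inner \<Rightarrow> 'b::complex_inner) \<Rightarrow> bool" where
  "bounded_clinear A \<longleftrightarrow> bounded_linear A \<and> (\<forall>c x. A (scaleC c x) = scaleC c (A x))"

definition closed_csubspace :: "'a::complex_inner set \<Rightarrow> bool" where
  "closed_csubspace M \<longleftrightarrow> closed M \<and> 0 \<in> M \<and> (\<forall>x\<in>M. \<forall>y\<in>M. x + y \<in> M)
     \<and> (\<forall>c. \<forall>x\<in>M. scaleC c x \<in> M)"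

definition is_orth_proj :: "('a::complex_inner \<Rightarrow> 'a) \<Rightarrow> bool" where
  "is_orth_proj P \<longleftrightarrow> bounded_clinear P \<and> (\<forall>x. P (P x) = P x)
     \<and> (\<forall>x y. cinner (P x) y = cinner x (P y))"

definition satisfies_N :: "('a::complex_inner \<Rightarrow> 'b::complex_inner) \<Rightarrow> 'a set \<Rightarrow> bool" where
  "satisfies_N A M \<longleftrightarrow> (\<exists>x0\<in>M. norm x0 = 1 \<and>
     norm (A x0) = Sup {norm (A x) | x. x \<in> M \<and> norm x = 1})"

definition satisfies_Nstar :: "('a::complex_inner \<Rightarrow> 'b::complex_inner) \<Rightarrow> 'a set \<Rightarrow> bool" where
  "satisfies_Nstar A M \<longleftrightarrow> (\<exists>x0\<in>M. norm x0 = 1 \<and>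
     norm (A x0) = Inf {norm (A x) | x. x \<in> M \<and> norm x = 1})"

definition has_AN :: "('a::complex_inner \<Rightarrow> 'b::complex_inner) \<Rightarrow> bool" where
  "has_AN A \<longleftrightarrow> (\<forall>M. closed_csubspace M \<and> M \<noteq> {0} \<longrightarrow> satisfies_N A M)"

definition has_ANstar :: "('a::complex_inner \<Rightarrow> 'b::complex_inner) \<Rightarrow> bool" where
  "has_ANstar A \<longleftrightarrow> (\<forall>M. closed_csubspace M \<and> M \<noteq> {0} \<longrightarrow> satisfies_Nstar A M)"

end

theory Submission
  imports Defs
begin

text \<open>For an orthogonal projection \<open>P\<close>, Pythagoras applied to \<open>x = (x - P x) + P x\<close> gives
  \<open>\<parallel>\<eta> x - P x\<parallel>\<^sup>2 = \<eta>\<^sup>2 \<parallel>x\<parallel>\<^sup>2 - (2\<eta> - 1) \<parallel>P x\<parallel>\<^sup>2\<close>.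
  Since \<open>2\<eta> - 1 > 0\<close>, on the unit sphere of a closed subspace \<open>M\<close> the quantity \<open>\<parallel>\<eta> x - P x\<parallel>\<close>
  is a decreasing function of \<open>\<parallel>P x\<parallel>\<close>, so any unit vector at which \<open>\<parallel>P x\<parallel>\<close> attains its
  supremum over \<open>M\<close> (which exists by property \<open>\<N>\<close>) is a minimiser of \<open>\<parallel>\<eta> x - P x\<parallel>\<close> on \<open>M\<close>.\<close>

context complex_inner
begin

lemma cinner_diff_left: "cinner (x - y) z = cinner x z - cinner y z"
  using cinner_add_left[of "x - y" y z] by (simp add: eq_diff_eq)

lemma cinner_diff_right: "cinner x (y - z) = cinner x y - cinner x z"
  by (metis cinner_diff_left cinner_commute complex_cnj_diff)

lemma cinner_add_right: "cinner x (y + z) = cinner x y + cinner x z"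
  by (metis cinner_commute cinner_add_left complex_cnj_add)

lemma cinner_scaleR_left: "cinner (scaleR r x) y = complex_of_real r * cinner x y"
  by (simp add: scaleR_scaleC cinner_scaleC_left)

lemma cinner_scaleR_right: "cinner x (scaleR r y) = complex_of_real r * cinner x y"
  by (metis cinner_scaleR_left cinner_commute complex_cnj_mult complex_cnj_complex_of_real)

lemma power2_norm_eq_cinner: "(norm x)\<^sup>2 = Re (cinner x x)"
  using norm_eq_sqrt_cinner cinner_self_nonneg by simp

lemma pythagoras_scaleR:
  assumes "cinner u v = 0"
  shows "(norm (scaleR a v + scaleR b u))\<^sup>2 = a\<^sup>2 * (norm v)\<^sup>2 + b\<^sup>2 * (norm u)\<^sup>2"
proof -
  have "cinner v u = 0"
    using assms cinner_commute by (metis complex_cnj_zero)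
  then have "cinner (scaleR a v + scaleR b u) (scaleR a v + scaleR b u)
      = complex_of_real (a\<^sup>2) * cinner v v + complex_of_real (b\<^sup>2) * cinner u u"
    by (simp add: cinner_add_left cinner_add_right cinner_scaleR_left cinner_scaleR_right
        assms algebra_simps power2_eq_square)
  then show ?thesis
    by (simp add: power2_norm_eq_cinner)
qed

end

lemma orth_proj_orthogonal_complement:
  assumes "is_orth_proj P"
  shows "cinner (P x) (x - P x) = 0"
  using assms by (simp add: is_orth_proj_def cinner_diff_right)

lemma power2_norm_orth_proj_decomp:
  assumes "is_orth_proj P"
  shows "(norm x)\<^sup>2 = (norm (x - P x))\<^sup>2 + (norm (P x))\<^sup>2"
  using pythagoras_scaleR[OF orth_proj_orthogonal_complement[OF assms], of 1 x 1] by simp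

lemma norm_orth_proj_le:
  assumes "is_orth_proj P"
  shows "norm (P x) \<le> norm x"
proof (rule power2_le_imp_le)
  show "(norm (P x))\<^sup>2 \<le> (norm x)\<^sup>2"
    using power2_norm_orth_proj_decomp[OF assms, of x] by simp
qed simp

lemma power2_norm_scaleC_minus_orth_proj:
  assumes "is_orth_proj P"
  shows "(norm (scaleC (complex_of_real \<eta>) x - P x))\<^sup>2
           = \<eta>\<^sup>2 * (norm x)\<^sup>2 - (2 * \<eta> - 1) * (norm (P x))\<^sup>2"
proof -
  have "scaleC (complex_of_real \<eta>) x - P x = scaleR \<eta> (x - P x) + scaleR (\<eta> - 1) (P x)"
    by (simp add: scaleR_scaleC[symmetric] algebra_simps)
  then have "(norm (scaleC (complex_of_real \<eta>) x - P x))\<^sup>2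
      = \<eta>\<^sup>2 * (norm (x - P x))\<^sup>2 + (\<eta> - 1)\<^sup>2 * (norm (P x))\<^sup>2"
    using pythagoras_scaleR[OF orth_proj_orthogonal_complement[OF assms]] by metis
  with power2_norm_orth_proj_decomp[OF assms, of x] show ?thesis
    by (simp add: power2_eq_square algebra_simps)
qed

lemma norm_scaleC_minus_orth_proj_antimono:
  assumes "is_orth_proj P" and "\<eta> > 1/2"
    and "norm x = norm y" and "norm (P y) \<le> norm (P x)"
  shows "norm (scaleC (complex_of_real \<eta>) x - P x) \<le> norm (scaleC (complex_of_real \<eta>) y - P y)"
proof -
  have "(2 * \<eta> - 1) * (norm (P y))\<^sup>2 \<le> (2 * \<eta> - 1) * (norm (P x))\<^sup>2"
    using assms(2,4) by (intro mult_left_mono power_mono) auto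
  then have "(norm (scaleC (complex_of_real \<eta>) x - P x))\<^sup>2
      \<le> (norm (scaleC (complex_of_real \<eta>) y - P y))\<^sup>2"
    unfolding power2_norm_scaleC_minus_orth_proj[OF assms(1)] using assms(3) by simp
  then show ?thesis
    by (rule power2_le_imp_le) simp
qed

lemma satisfies_N_obtains_maximiser:
  assumes "satisfies_N A M" and "\<And>x. norm (A x) \<le> K * norm x"
  obtains x0 where "x0 \<in> M" "norm x0 = 1"
    "\<And>x. x \<in> M \<Longrightarrow> norm x = 1 \<Longrightarrow> norm (A x) \<le> norm (A x0)"
proof -
  obtain x0 where x0: "x0 \<in> M" "norm x0 = 1"
    and sup: "norm (A x0) = Sup {norm (A x) | x. x \<in> M \<and> norm x = 1}"
    using assms(1) unfolding satisfies_N_def by blast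
  have bdd: "bdd_above {norm (A x) | x. x \<in> M \<and> norm x = 1}"
  proof (rule bdd_aboveI)
    fix r assume "r \<in> {norm (A x) | x. x \<in> M \<and> norm x = 1}"
    then obtain x where "r = norm (A x)" "norm x = 1" by blast
    with assms(2)[of x] show "r \<le> K" by simp
  qed
  have "norm (A x) \<le> norm (A x0)" if "x \<in> M" "norm x = 1" for x
    unfolding sup using that by (intro cSup_upper[OF _ bdd]) blast
  with x0 show thesis by (rule that)
qed

lemma satisfies_NstarI:
  assumes "x0 \<in> M" "norm x0 = 1"
    and "\<And>x. x \<in> M \<Longrightarrow> norm x = 1 \<Longrightarrow> norm (A x0) \<le> norm (A x)"
  shows "satisfies_Nstar A M"
  unfolding satisfies_Nstar_def
proof (intro bexI conjI)
  show "norm (A x0) = Inf {norm (A x) | x. x \<in> M \<and> norm x = 1}"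
    by (rule cInf_eq_minimum[symmetric]) (use assms in blast)+
qed (fact assms)+

theorem proposition3p12:
  fixes P :: "'a::chilbert_space \<Rightarrow> 'a" and \<eta> :: real
  assumes "is_orth_proj P"
    and "has_AN P"
    and "\<eta> > 1/2"
  shows "has_ANstar (\<lambda>x. scaleC (complex_of_real \<eta>) x - P x)"
  unfolding has_ANstar_def
proof (intro allI impI)
  fix M :: "'a set"
  assume "closed_csubspace M \<and> M \<noteq> {0}"
  then have "satisfies_N P M"
    using assms(2) unfolding has_AN_def by blast
  then obtain x0 where x0: "x0 \<in> M" "norm x0 = 1"
    and max: "\<And>x. x \<in> M \<Longrightarrow> norm x = 1 \<Longrightarrow> norm (P x) \<le> norm (P x0)"
    using norm_orth_proj_le[OF assms(1)]
    by (elim satisfies_N_obtains_maximiser[where K = 1]) auto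
  show "satisfies_Nstar (\<lambda>x. scaleC (complex_of_real \<eta>) x - P x) M"
    using x0 max
    by (intro satisfies_NstarI[OF x0] norm_scaleC_minus_orth_proj_antimono[OF assms(1,3)]) auto
qed

end
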